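(* For every integer $n\ge0$, $$\sum_{k=0}^n\frac{\binom{n}{k}(-1)^k}{4k+1}=\frac{1}{4n+1}\cdot\frac{(-1)^n}{\binom{-1/4}{n}},\qquad \sum_{k=0}^n\frac{\binom{n}{k}(-1)^k}{4k+1}H_k=-\frac{1}{4n+1}\cdot\frac{(-1)^n}{\binom{-1/4}{n}}\sum_{k=1}^n\frac{\binom{-1/4}{k}(-1)^k}{k},$$ and $$\sum_{k=0}^n\frac{\binom{n}{k}(-1)^k}{4k+3}=\frac{(-1)^n}{(4n+3)\binom{-3/4}{n}},\qquad \sum_{k=0}^n\frac{\binom{n}{k}(-1)^kH_k}{4k+3}=-\frac{(-1)^n}{(4n+3)\binom{-3/4}{n}}\sum_{k=1}^n\frac{\binom{-3/4}{k}(-1)^k}{k}.$$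
   Context: $H_k=\sum_{i=1}^k1/i$ with $H_0=0$; for rational $a$, $\binom{a}{k}=a(a-1)\cdots(a-k+1)/k!$. *)

theory Defs
  imports Complex_Main
begin

definition H :: "nat \<Rightarrow> rat" where
  "H k = (\<Sum>i=1..k. 1 / of_nat i)"

end

theory Submission
  imports Defs
begin

text \<open>Write \<open>S\<^sub>w(n) = \<Sum>\<^sub>k C(n,k) (-1)\<^sup>k w\<^sub>k / (d k + c)\<close>. Multiplying by \<open>d(n+1) + c\<close> and using
  \<open>(n+1-k) C(n+1,k) = (n+1) C(n,k)\<close> gives the recurrence
  \<open>(d(n+1) + c) S\<^sub>w(n+1) = \<Sum>\<^sub>k C(n+1,k) (-1)\<^sup>k w\<^sub>k + d(n+1) S\<^sub>w(n)\<close>.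
  For \<open>w = 1\<close> the alternating binomial sum vanishes, and the remaining first-order recurrence
  is also satisfied by \<open>(-1)\<^sup>n / ((d n + c) (-c/d gchoose n))\<close>.
  For \<open>w = H\<close> the alternating sum equals \<open>-1/(n+1)\<close>, and the inhomogeneous recurrence is
  solved by variation of constants, the constant being a partial sum of \<open>(-c/d gchoose k)(-1)\<^sup>k/k\<close>.\<close>

definition alt_binom_frac_sum :: "(nat \<Rightarrow> 'a) \<Rightarrow> 'a \<Rightarrow> 'a \<Rightarrow> nat \<Rightarrow> 'a::field_char_0" where
  "alt_binom_frac_sum w d c n = (\<Sum>k=0..n. of_nat (n choose k) * (-1)^k * w k / (d * of_nat k + c))"

lemma alt_binom_frac_sum_Suc:
  assumes den: "\<And>k. d * of_nat k + c \<noteq> 0"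
  shows "(d * of_nat (Suc n) + c) * alt_binom_frac_sum w d c (Suc n)
           = (\<Sum>k=0..Suc n. of_nat (Suc n choose k) * (-1)^k * w k)
             + d * of_nat (Suc n) * alt_binom_frac_sum w d c n"
proof -
  have split_term: "(d * of_nat (Suc n) + c) * (of_nat (Suc n choose k) * (-1)^k * w k / (d * of_nat k + c))
      = of_nat (Suc n choose k) * (-1)^k * w k
        + d * of_nat (Suc n) * (of_nat (n choose k) * (-1)^k * w k / (d * of_nat k + c))" for k
  proof -
    have absorb: "(of_nat (Suc n) - of_nat k) * of_nat (Suc n choose k)
        = (of_nat (Suc n) * of_nat (n choose k) :: 'a)"
    proof (cases "k \<le> Suc n")
      case True
      then show ?thesis
        using binomial_absorb_comp[of "Suc n" k] by (metis diff_Suc_1 of_nat_diff of_nat_mult)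
    qed (simp add: binomial_eq_0 not_le)
    have "(d * of_nat (Suc n) + c) * (of_nat (Suc n choose k) * (-1)^k * w k / (d * of_nat k + c))
        = of_nat (Suc n choose k) * (-1)^k * w k
          + d * ((of_nat (Suc n) - of_nat k) * of_nat (Suc n choose k)) * ((-1)^k * w k) / (d * of_nat k + c)"
      using den[of k] by (simp add: field_simps)
    then show ?thesis
      unfolding absorb by (simp add: mult_ac)
  qed
  have drop_last: "(\<Sum>k=0..Suc n. of_nat (n choose k) * (-1)^k * w k / (d * of_nat k + c))
      = alt_binom_frac_sum w d c n"
    by (simp add: alt_binom_frac_sum_def binomial_eq_0)
  have "(d * of_nat (Suc n) + c) * alt_binom_frac_sum w d c (Suc n)
      = (\<Sum>k=0..Suc n. (d * of_nat (Suc n) + c) * (of_nat (Suc n choose k) * (-1)^k * w k / (d * of_nat k + c)))"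
    by (simp only: alt_binom_frac_sum_def sum_distrib_left)
  also have "\<dots> = (\<Sum>k=0..Suc n. of_nat (Suc n choose k) * (-1)^k * w k)
      + d * of_nat (Suc n) * (\<Sum>k=0..Suc n. of_nat (n choose k) * (-1)^k * w k / (d * of_nat k + c))"
    by (simp only: split_term sum.distrib sum_distrib_left)
  finally show ?thesis
    unfolding drop_last .
qed

lemma gbinomial_nonzero:
  fixes a :: "'a::field_char_0"
  assumes "\<And>i. i < n \<Longrightarrow> a \<noteq> of_nat i"
  shows "a gchoose n \<noteq> 0"
proof -
  have "fact n * (a gchoose n) \<noteq> 0"
    unfolding gbinomial_mult_fact using assms by simp
  then show ?thesis by simp
qed

lemma gbinomial_neg_quotient_nonzero:
  fixes c d :: "'a::field_char_0"
  assumes "d \<noteq> 0" and "\<And>k. d * of_nat k + c \<noteq> 0"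
  shows "(-c/d) gchoose n \<noteq> 0"
proof (rule gbinomial_nonzero)
  show "-c/d \<noteq> of_nat i" for i
    using assms by (metis eq_neg_iff_add_eq_0 mult_of_nat_commute nonzero_eq_divide_eq)
qed

lemma alt_binom_frac_sum_one:
  fixes c d :: "'a::field_char_0"
  assumes "d \<noteq> 0" and den: "\<And>k. d * of_nat k + c \<noteq> 0"
  shows "alt_binom_frac_sum (\<lambda>_. 1) d c n = (-1)^n / ((d * of_nat n + c) * ((-c/d) gchoose n))"
proof (induction n)
  case 0
  then show ?case by (simp add: alt_binom_frac_sum_def)
next
  case (Suc n)
  have "(\<Sum>k=0..Suc n. of_nat (Suc n choose k) * (-1)^k * 1 :: 'a) = 0"
    using choose_alternating_sum[of "Suc n", where 'a='a] by (simp add: atLeast0AtMost mult.commute)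
  then have "(d * of_nat (Suc n) + c) * alt_binom_frac_sum (\<lambda>_. 1) d c (Suc n)
      = d * of_nat (Suc n) * alt_binom_frac_sum (\<lambda>_. 1) d c n"
    using alt_binom_frac_sum_Suc[OF den, of n "\<lambda>_. 1"] by simp
  also have "\<dots> = (d * of_nat (Suc n) + c) * ((-1)^Suc n / ((d * of_nat (Suc n) + c) * ((-c/d) gchoose Suc n)))"
  proof -
    define g g' where "g = (-c/d) gchoose n" and "g' = (-c/d) gchoose Suc n"
    have "g \<noteq> 0" "g' \<noteq> 0"
      unfolding g_def g'_def using gbinomial_neg_quotient_nonzero[OF assms] by blast+
    have "of_nat (Suc n) * g' = (-c/d - of_nat n) * g"
      unfolding g_def g'_def using gbinomial_mult_1[of "-c/d" n] by (simp add: algebra_simps)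
    then have g': "g' = - ((d * of_nat n + c) * g) / (d * of_nat (Suc n))"
      using \<open>d \<noteq> 0\<close> by (simp add: field_simps del: of_nat_Suc)
    have "(-1)^Suc n / g' = d * of_nat (Suc n) * ((-1)^n / ((d * of_nat n + c) * g))"
      unfolding g' by (simp del: of_nat_Suc)
    then show ?thesis
      using Suc.IH den[of "Suc n"] unfolding g_def g'_def by simp
  qed
  finally show ?case
    using mult_left_cancel[OF den[of "Suc n"]] by blast
qed

lemma alt_binom_frac_sum_one_mult_gbinomial:
  fixes c d :: "'a::field_char_0"
  assumes "d \<noteq> 0" and den: "\<And>k. d * of_nat k + c \<noteq> 0"
  shows "(d * of_nat n + c) * alt_binom_frac_sum (\<lambda>_. 1) d c n * ((-c/d) gchoose n) * (-1)^n = 1"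
proof -
  have "((-1)^n * (-1)^n :: 'a) = 1"
    by (simp flip: power_add)
  then show ?thesis
    using den[of n] gbinomial_neg_quotient_nonzero[OF assms, of n]
    by (simp add: alt_binom_frac_sum_one[OF assms])
qed

lemma sum_Suc_choose_mult:
  fixes f :: "nat \<Rightarrow> 'a::comm_semiring_1"
  shows "(\<Sum>k=0..Suc m. of_nat (Suc m choose k) * f k)
     = (\<Sum>k=0..m. of_nat (m choose k) * f k) + (\<Sum>k=0..m. of_nat (m choose k) * f (Suc k))"
proof -
  have "(\<Sum>k=0..Suc m. of_nat (Suc m choose k) * f k)
      = f 0 + (\<Sum>k=0..m. of_nat (m choose Suc k) * f (Suc k)) + (\<Sum>k=0..m. of_nat (m choose k) * f (Suc k))"
    by (simp add: sum.atLeast0_atMost_Suc_shift distrib_right sum.distrib add_ac del: sum.cl_ivl_Suc)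
  also have "f 0 + (\<Sum>k=0..m. of_nat (m choose Suc k) * f (Suc k)) = (\<Sum>k=0..Suc m. of_nat (m choose k) * f k)"
    by (simp add: sum.atLeast0_atMost_Suc_shift del: sum.cl_ivl_Suc)
  also have "\<dots> = (\<Sum>k=0..m. of_nat (m choose k) * f k)"
    by (simp add: binomial_eq_0)
  finally show ?thesis .
qed

text \<open>By Pascal's rule and \<open>H (k+1) = H k + 1/(k+1)\<close> the harmonic terms cancel, leaving
  \<open>-\<Sum>\<^sub>k C(m,k) (-1)\<^sup>k / (k+1) = -1/(m+1)\<close>.\<close>
lemma alt_binom_sum_harmonic:
  "(\<Sum>k=0..Suc m. of_nat (Suc m choose k) * (-1)^k * H k) = - 1 / of_nat (Suc m)"
proof -
  have den: "1 * of_nat k + (1::rat) \<noteq> 0" for k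
    by (metis of_nat_Suc of_nat_neq_0 mult_1 add.commute)
  have "(-1 gchoose m :: rat) = (-1)^m"
    using gbinomial_minus[of 1 m] by (simp add: binomial_gbinomial[symmetric])
  then have reciprocal: "alt_binom_frac_sum (\<lambda>_. 1) 1 1 m = (1 / of_nat (Suc m) :: rat)"
    using alt_binom_frac_sum_one[OF one_neq_zero den, of m] by (simp add: add.commute)
  have "(\<Sum>k=0..Suc m. of_nat (Suc m choose k) * ((-1)^k * H k))
      = (\<Sum>k=0..m. of_nat (m choose k) * ((-1)^k * H k))
        + (\<Sum>k=0..m. of_nat (m choose k) * ((-1)^Suc k * H (Suc k)))"
    by (rule sum_Suc_choose_mult)
  also have "(\<Sum>k=0..m. of_nat (m choose k) * ((-1)^Suc k * H (Suc k)))
      = - (\<Sum>k=0..m. of_nat (m choose k) * ((-1)^k * H k)) - alt_binom_frac_sum (\<lambda>_. 1) 1 1 m"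
  proof -
    have "H (Suc k) = H k + 1 / (1 * of_nat k + 1)" for k
      by (simp add: H_def add.commute)
    then have "of_nat (m choose k) * ((-1)^Suc k * H (Suc k))
        = - (of_nat (m choose k) * ((-1)^k * H k)) - of_nat (m choose k) * (-1)^k * 1 / (1 * of_nat k + 1)"
      for k
      by (simp add: algebra_simps)
    then show ?thesis
      by (simp only: alt_binom_frac_sum_def sum_subtractf sum_negf)
  qed
  finally show ?thesis
    using reciprocal by (simp add: mult.assoc)
qed

lemma alt_binom_frac_sum_harmonic:
  fixes c d :: rat
  assumes "d \<noteq> 0" and den: "\<And>k. d * of_nat k + c \<noteq> 0"
  shows "alt_binom_frac_sum H d c n
    = - alt_binom_frac_sum (\<lambda>_. 1) d c n * (\<Sum>k=1..n. ((-c/d) gchoose k) * (-1)^k / of_nat k)"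
proof (induction n)
  case 0
  then show ?case by (simp add: alt_binom_frac_sum_def H_def)
next
  case (Suc n)
  define S T Q where "S = alt_binom_frac_sum (\<lambda>_. 1) d c"
    and "T = alt_binom_frac_sum H d c"
    and "Q = (\<lambda>n. \<Sum>k=1..n. ((-c/d) gchoose k) * (-1)^k / of_nat (k::nat))"
  define D N where "D = d * of_nat (Suc n) + c" and "N = (of_nat (Suc n) :: rat)"
  have "(\<Sum>k=0..Suc n. of_nat (Suc n choose k) * (-1::rat)^k * 1) = 0"
    using choose_alternating_sum[of "Suc n", where 'a=rat] by (simp add: atLeast0AtMost mult.commute)
  then have S_Suc: "D * S (Suc n) = d * N * S n"
    using alt_binom_frac_sum_Suc[OF den, of n "\<lambda>_. 1"] unfolding S_def D_def N_def by simp
  have T_Suc: "D * T (Suc n) = - 1 / N + d * N * T n"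
    using alt_binom_frac_sum_Suc[OF den, of n H] alt_binom_sum_harmonic[of n]
    unfolding T_def D_def N_def by simp
  have last_term: "D * S (Suc n) * ((-c/d) gchoose Suc n) * (-1)^Suc n = 1"
    using alt_binom_frac_sum_one_mult_gbinomial[OF assms] unfolding S_def D_def by blast
  have Q_Suc: "Q (Suc n) = Q n + ((-c/d) gchoose Suc n) * (-1)^Suc n / N"
    unfolding Q_def N_def by simp
  have IH: "T n = - S n * Q n"
    using Suc.IH unfolding S_def T_def Q_def .
  have "D * (- S (Suc n) * Q (Suc n))
      = - (D * S (Suc n)) * Q n - D * S (Suc n) * ((-c/d) gchoose Suc n) * (-1)^Suc n / N"
    unfolding Q_Suc by (simp add: algebra_simps)
  also have "\<dots> = D * T (Suc n)"
    unfolding last_term unfolding T_Suc S_Suc IH by simp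
  finally show ?case
    using mult_left_cancel[OF den[of "Suc n"]] unfolding S_def T_def Q_def D_def by metis
qed

theorem mainTheorem8:
  fixes n :: nat
  shows "((\<Sum>k=0..n. of_nat (n choose k) * (-1)^k / (4 * of_nat k + 1))
           = 1 / (4 * of_nat n + 1) * ((-1)^n / ((-1/4 :: rat) gchoose n))) \<and>
        ((\<Sum>k=0..n. of_nat (n choose k) * (-1)^k / (4 * of_nat k + 1) * H k)
           = - (1 / (4 * of_nat n + 1) * ((-1)^n / ((-1/4 :: rat) gchoose n)))
             * (\<Sum>k=1..n. ((-1/4 :: rat) gchoose k) * (-1)^k / of_nat k)) \<and>
        ((\<Sum>k=0..n. of_nat (n choose k) * (-1)^k / (4 * of_nat k + 3))
           = (-1)^n / ((4 * of_nat n + 3) * ((-3/4 :: rat) gchoose n))) \<and>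
        ((\<Sum>k=0..n. of_nat (n choose k) * (-1)^k * H k / (4 * of_nat k + 3))
           = - ((-1)^n / ((4 * of_nat n + 3) * ((-3/4 :: rat) gchoose n)))
             * (\<Sum>k=1..n. ((-3/4 :: rat) gchoose k) * (-1)^k / of_nat k))"
proof -
  have den: "4 * of_nat k + c \<noteq> (0::rat)" if "c > 0" for k c
    using that of_nat_0_le_iff[of k] by linarith
  note one = alt_binom_frac_sum_one[of 4, OF _ den]
    and harmonic = alt_binom_frac_sum_harmonic[of 4, OF _ den]
  show ?thesis
    using one[of 1 n] one[of 3 n] harmonic[of 1 n] harmonic[of 3 n]
    by (simp add: alt_binom_frac_sum_def mult_ac)
qed

end
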